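(* Let $n\ge2$ be an integer and $\lambda>0$, and let $\gamma(t)=(\omega(t),x(t),y(t))$, $t\in(S,T)$ the maximal interval of existence, be a solution with $\omega>0$ of the system $$\frac{d\omega}{dt}=x\omega,\qquad \frac{dx}{dt}=x^2-xy+n-1-\lambda\omega^2,\qquad \frac{dy}{dt}=xy-nx^2-\lambda\omega^2.$$ Suppose $x(t_0)>1$ and $\frac{dx}{dt}(t_0)>0$ at some $t_0\in(S,T)$. Then $\int_{t_0}^T\omega(\sigma)\,d\sigma<\infty$. *)

theory Defs
  imports "HOL-Analysis.Analysis"
begin

definition eIoo :: "ereal \<Rightarrow> ereal \<Rightarrow> real set" where
  "eIoo S T = {t. S < ereal t \<and> ereal t < T}"

definition is_sol :: "nat \<Rightarrow> real \<Rightarrow> real set \<Rightarrow> (real \<Rightarrow> real) \<Rightarrow> (real \<Rightarrow> real) \<Rightarrow> (real \<Rightarrow> real) \<Rightarrow> bool" where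
  "is_sol n lam I w x y \<longleftrightarrow>
     (\<forall>t\<in>I. (w has_real_derivative (x t * w t)) (at t) \<and>
            (x has_real_derivative (x t ^ 2 - x t * y t + real n - 1 - lam * w t ^ 2)) (at t) \<and>
            (y has_real_derivative (x t * y t - real n * x t ^ 2 - lam * w t ^ 2)) (at t))"

definition is_maximal_sol :: "nat \<Rightarrow> real \<Rightarrow> ereal \<Rightarrow> ereal \<Rightarrow> (real \<Rightarrow> real) \<Rightarrow> (real \<Rightarrow> real) \<Rightarrow> (real \<Rightarrow> real) \<Rightarrow> bool" where
  "is_maximal_sol n lam S T w x y \<longleftrightarrow>
     S < T \<and> is_sol n lam (eIoo S T) w x y \<and>
     (\<forall>S' T' w' x' y'. S' \<le> S \<and> T \<le> T' \<and> is_sol n lam (eIoo S' T') w' x' y' \<and>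
        (\<forall>t\<in>eIoo S T. w' t = w t \<and> x' t = x t \<and> y' t = y t) \<longrightarrow> S' = S \<and> T' = T)"

end

theory Submission
  imports Defs
begin

text \<open>
  Write D = x' and q = -(x + y). The system gives
  D' = D (3x - y) + (n - 1) x (x^2 - 1),  q' = (n - 1)(x^2 - 1) + 2 lam w^2
  and, for R = (x - y) / w^2, R' = (n - 1)(x^2 + 1) / w^2.
  While x > 1 the first identity gives D' \<ge> -M D on compact intervals, so D stays positive on [t0, T);
  hence x increases and stays above 1, w increases, and q grows at least linearly.

  If x is bounded by B, then T is finite (for T = \<infinity>, q eventually becomes nonnegative, then
  3x - y > 0 makes D nondecreasing and x grows linearly), and w \<le> w(t0) e^(B (t - t0)) is bounded
  on the finite interval (t0, T).
  If x is unbounded, q still becomes nonnegative at some t2 (otherwise q - c x is nondecreasing for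
  some c > 0), from then on x - y > 0 and R increases, so lam w^2 \<le> \<epsilon> (x - y) with
  \<epsilon> = lam w(t2)^2 / (x - y)(t2). Once x > 4 \<epsilon> this forces D \<ge> 3 x^2 / 2, so
  F = -2 w / x satisfies F' \<ge> w, and F \<le> 0 bounds the tail integral of w by -F at its start.
\<close>

lemma DERIV_ge_mult_imp_exp_lower_bound:
  fixes f f' :: "real \<Rightarrow> real"
  assumes "a \<le> b" and "continuous_on {a..b} f"
    and "\<And>t. a < t \<Longrightarrow> t < b \<Longrightarrow> (f has_real_derivative f' t) (at t)"
    and "\<And>t. a < t \<Longrightarrow> t < b \<Longrightarrow> c * f t \<le> f' t"
  shows "f a * exp (c * (b - a)) \<le> f b"
proof -
  have "f a * exp (- c * a) \<le> f b * exp (- c * b)"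
  proof (rule DERIV_nonneg_imp_increasing_open[OF assms(1)])
    fix t assume t: "a < t" "t < b"
    have "((\<lambda>t. f t * exp (- c * t)) has_real_derivative (f' t - c * f t) * exp (- c * t)) (at t)"
      using assms(3)[OF t] by (auto intro!: derivative_eq_intros simp: algebra_simps)
    then show "\<exists>y. ((\<lambda>t. f t * exp (- c * t)) has_real_derivative y) (at t) \<and> 0 \<le> y"
      using assms(4)[OF t] by force
  qed (use assms(2) in \<open>intro continuous_intros\<close>)
  from mult_right_mono[OF this, of "exp (c * b)"] show ?thesis
    by (simp add: mult.assoc right_diff_distrib flip: exp_add)
qed

lemma first_nonpos_point:
  fixes f :: "real \<Rightarrow> real"
  assumes "a \<le> b" and "continuous_on {a..b} f" and "0 < f a" and "f b \<le> 0"
  obtains \<tau> where "a < \<tau>" "\<tau> \<le> b" "f \<tau> \<le> 0" "\<And>t. a \<le> t \<Longrightarrow> t < \<tau> \<Longrightarrow> 0 < f t"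
proof -
  define Z where "Z = {a..b} \<inter> f -` {..0}"
  have "closed Z"
    unfolding Z_def using assms(2) by (rule continuous_closed_preimage) auto
  moreover have "b \<in> Z" "bdd_below Z"
    using assms(1,4) unfolding Z_def by (auto intro: bdd_belowI[of _ a])
  ultimately have "Inf Z \<in> Z"
    using closed_contains_Inf by blast
  moreover have "0 < f t" if "a \<le> t" "t < Inf Z" for t
  proof (rule ccontr)
    assume "\<not> 0 < f t"
    moreover have "t \<le> b"
      using that cInf_lower[OF \<open>b \<in> Z\<close> \<open>bdd_below Z\<close>] by linarith
    ultimately have "t \<in> Z"
      using that unfolding Z_def by auto
    with that show False
      using cInf_lower[OF _ \<open>bdd_below Z\<close>] by fastforce
  qed
  moreover have "a \<noteq> Inf Z"
    using \<open>Inf Z \<in> Z\<close> assms(3) unfolding Z_def by auto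
  ultimately show ?thesis
    using that[of "Inf Z"] unfolding Z_def by auto
qed

lemma nn_integral_bounded_less_top:
  fixes f :: "real \<Rightarrow> real"
  assumes "A \<subseteq> {a..b}" and "\<And>t. t \<in> A \<Longrightarrow> f t \<le> C"
  shows "(\<integral>\<^sup>+t\<in>A. ennreal (f t) \<partial>lborel) < \<infinity>"
proof -
  have "(\<integral>\<^sup>+t\<in>A. ennreal (f t) \<partial>lborel) \<le> (\<integral>\<^sup>+t. ennreal C * indicator {a..b} t \<partial>lborel)"
    using assms by (intro nn_integral_mono) (auto split: split_indicator intro: ennreal_leI)
  also have "\<dots> = ennreal C * emeasure lborel {a..b}"
    by (rule nn_integral_cmult_indicator) simp
  also have "\<dots> < \<infinity>"
    by (simp add: ennreal_mult_less_top emeasure_lborel_Icc_eq)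
  finally show ?thesis .
qed

lemma nn_integral_Icc_le_FTC:
  fixes f F F' :: "real \<Rightarrow> real"
  assumes "a \<le> b" and "continuous_on {a..b} F'"
    and "\<And>t. t \<in> {a..b} \<Longrightarrow> (F has_real_derivative F' t) (at t)"
    and "\<And>t. t \<in> {a..b} \<Longrightarrow> 0 \<le> f t" and "\<And>t. t \<in> {a..b} \<Longrightarrow> f t \<le> F' t"
  shows "(\<integral>\<^sup>+t\<in>{a..b}. ennreal (f t) \<partial>lborel) \<le> ennreal (F b - F a)"
proof -
  define g where "g t = indicator {a..b} t *\<^sub>R F' t" for t
  have "g \<in> borel_measurable borel"
    unfolding g_def using assms(2) by (rule borel_measurable_continuous_on_indicator[rotated]) simp
  moreover have "(F has_real_derivative g t) (at t)" "0 \<le> g t" if "t \<in> {a..b}" for t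
    using assms(3-5)[OF that] that unfolding g_def by auto
  ultimately have "(\<integral>\<^sup>+t\<in>{a..b}. ennreal (g t) \<partial>lborel) = F b - F a"
    using assms(1) by (intro nn_integral_FTC_Icc)
  moreover have "(\<integral>\<^sup>+t\<in>{a..b}. ennreal (f t) \<partial>lborel) \<le> (\<integral>\<^sup>+t\<in>{a..b}. ennreal (g t) \<partial>lborel)"
    using assms(5) unfolding g_def by (intro nn_integral_mono) (auto split: split_indicator intro: ennreal_leI)
  ultimately show ?thesis
    by simp
qed

lemma borel_measurable_continuous_on_einterval:
  fixes f :: "real \<Rightarrow> real"
  assumes "continuous_on (einterval a b) f"
  shows "(\<lambda>t. ennreal (f t) * indicator (einterval a b) t) \<in> borel_measurable borel"
proof -
  have "(\<lambda>t. ennreal (indicator (einterval a b) t *\<^sub>R f t)) \<in> borel_measurable borel"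
    using borel_measurable_continuous_on_indicator[OF _ assms] by measurable
  moreover have "(\<lambda>t. ennreal (indicator (einterval a b) t *\<^sub>R f t))
      = (\<lambda>t. ennreal (f t) * indicator (einterval a b) t)"
    by (auto split: split_indicator)
  ultimately show ?thesis
    by simp
qed

lemma nn_integral_einterval_le:
  fixes f :: "real \<Rightarrow> real" and a :: real and b :: ereal and K :: ennreal
  assumes "ereal a < b" and "continuous_on (einterval a b) f"
    and "\<And>u. a < u \<Longrightarrow> ereal u < b \<Longrightarrow> (\<integral>\<^sup>+t\<in>{a..u}. ennreal (f t) \<partial>lborel) \<le> K"
  shows "(\<integral>\<^sup>+t\<in>einterval a b. ennreal (f t) \<partial>lborel) \<le> K"
proof -
  obtain l u :: "nat \<Rightarrow> real" where E: "einterval a b = (\<Union>i. {l i .. u i})"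
    and "incseq u" "decseq l" "\<And>i. l i < u i" and l: "\<And>i. ereal a < ereal (l i)" and u: "\<And>i. u i < b"
    by (rule einterval_Icc_approximation[OF assms(1)]) blast
  define h where "h t = ennreal (f t) * indicator (einterval a b) t" for t
  have [measurable]: "h \<in> borel_measurable borel"
    unfolding h_def by (rule borel_measurable_continuous_on_einterval[OF assms(2)])
  have h_eq: "h t * indicator A t = ennreal (f t) * indicator A t" if "A \<subseteq> einterval a b" for A t
    using that unfolding h_def by (auto split: split_indicator)
  have "(\<integral>\<^sup>+t\<in>einterval a b. ennreal (f t) \<partial>lborel) = emeasure (density lborel h) (\<Union>i. {l i .. u i})"
    by (simp add: emeasure_density h_eq flip: E)
  also have "\<dots> = (SUP i. emeasure (density lborel h) {l i .. u i})"
    using \<open>incseq u\<close> \<open>decseq l\<close>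
    by (intro SUP_emeasure_incseq[symmetric]) (auto simp: incseq_def decseq_def intro: order_trans)
  also have "\<dots> \<le> K"
  proof (rule SUP_least)
    fix i
    have "{l i .. u i} \<subseteq> einterval a b"
      using E by blast
    then have "emeasure (density lborel h) {l i .. u i} = (\<integral>\<^sup>+t\<in>{l i .. u i}. ennreal (f t) \<partial>lborel)"
      by (simp add: emeasure_density h_eq)
    also have "\<dots> \<le> (\<integral>\<^sup>+t\<in>{a .. u i}. ennreal (f t) \<partial>lborel)"
      using l[of i] by (intro nn_integral_mono) (auto split: split_indicator)
    also have "\<dots> \<le> K"
      using assms(3) l[of i] u[of i] \<open>l i < u i\<close> by auto
    finally show "emeasure (density lborel h) {l i .. u i} \<le> K" .
  qed
  finally show ?thesis .
qed

lemma nn_integral_einterval_split: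
  fixes f :: "real \<Rightarrow> real" and a c :: real and b :: ereal
  assumes "continuous_on (einterval a b) f" and "a \<le> c" and "ereal c < b"
  shows "(\<integral>\<^sup>+t\<in>einterval a b. ennreal (f t) \<partial>lborel)
    = (\<integral>\<^sup>+t\<in>{a<..c}. ennreal (f t) \<partial>lborel) + (\<integral>\<^sup>+t\<in>einterval c b. ennreal (f t) \<partial>lborel)"
proof -
  define h where "h t = ennreal (f t) * indicator (einterval a b) t" for t
  have [measurable]: "h \<in> borel_measurable lborel"
    unfolding h_def using borel_measurable_continuous_on_einterval[OF assms(1)] by simp
  have h_eq: "(\<integral>\<^sup>+t\<in>A. h t \<partial>lborel) = (\<integral>\<^sup>+t\<in>A. ennreal (f t) \<partial>lborel)"
    if "A \<subseteq> einterval a b" for A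
    using that unfolding h_def by (intro nn_integral_cong) (auto split: split_indicator)
  have split: "einterval a b = {a<..c} \<union> einterval c b"
    using assms(2,3) by (auto simp: einterval_def intro: le_less_trans[of _ "ereal c"])
  have "(\<integral>\<^sup>+t\<in>{a<..c} \<union> einterval c b. h t \<partial>lborel)
      = (\<integral>\<^sup>+t\<in>{a<..c}. h t \<partial>lborel) + (\<integral>\<^sup>+t\<in>einterval c b. h t \<partial>lborel)"
    by (rule nn_integral_disjoint_pair) (auto simp: einterval_def)
  then show ?thesis
    using h_eq split by simp
qed

locale expanding_solution =
  fixes n :: nat and lam :: real and T :: ereal and w x y :: "real \<Rightarrow> real" and t0 :: real
  assumes n_ge_2: "2 \<le> n" and lam_pos: "0 < lam"
    and t0_less_T: "ereal t0 < T"
    and solves: "is_sol n lam {t. t0 \<le> t \<and> ereal t < T} w x y"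
    and w_pos: "\<And>t. t0 \<le> t \<Longrightarrow> ereal t < T \<Longrightarrow> 0 < w t"
    and x_t0_gt_1: "1 < x t0"
    and x'_t0_pos: "0 < x t0 ^ 2 - x t0 * y t0 + real n - 1 - lam * w t0 ^ 2"
begin

definition J :: "real set" where
  "J = {t. t0 \<le> t \<and> ereal t < T}"

definition D :: "real \<Rightarrow> real" where
  "D t = x t ^ 2 - x t * y t + real n - 1 - lam * w t ^ 2"

definition q :: "real \<Rightarrow> real" where
  "q t = - (x t + y t)"

definition R :: "real \<Rightarrow> real" where
  "R t = (x t - y t) / w t ^ 2"

definition F :: "real \<Rightarrow> real" where
  "F t = - 2 * w t / x t"

lemma t0_in_J: "t0 \<in> J"
  using t0_less_T by (simp add: J_def)

lemma Icc_subset_J: "s \<in> J \<Longrightarrow> t \<in> J \<Longrightarrow> {s..t} \<subseteq> J"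
  unfolding J_def by (auto intro: le_less_trans[of _ "ereal t"])

lemma J_ge_t0: "t \<in> J \<Longrightarrow> t0 \<le> t"
  by (simp add: J_def)

lemma w_pos_J: "t \<in> J \<Longrightarrow> 0 < w t"
  using w_pos by (simp add: J_def)

lemma w_deriv: "t \<in> J \<Longrightarrow> (w has_real_derivative x t * w t) (at t)"
  and x_deriv: "t \<in> J \<Longrightarrow> (x has_real_derivative D t) (at t)"
  and y_deriv: "t \<in> J \<Longrightarrow> (y has_real_derivative x t * y t - real n * x t ^ 2 - lam * w t ^ 2) (at t)"
  using solves by (auto simp: is_sol_def J_def D_def)

lemma D_deriv:
  assumes "t \<in> J"
  shows "(D has_real_derivative D t * (3 * x t - y t) + (real n - 1) * x t * (x t ^ 2 - 1)) (at t)"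
proof -
  have "(D has_real_derivative 2 * x t * D t - (D t * y t + x t * (x t * y t - real n * x t ^ 2 - lam * w t ^ 2))
      - lam * (2 * w t * (x t * w t))) (at t)"
    unfolding D_def[abs_def] using x_deriv[OF assms, unfolded D_def] y_deriv[OF assms] w_deriv[OF assms]
    by (auto intro!: derivative_eq_intros)
  then show ?thesis
    by (rule DERIV_cong) (simp add: D_def algebra_simps power2_eq_square power3_eq_cube)
qed

lemma q_deriv: "t \<in> J \<Longrightarrow> (q has_real_derivative (real n - 1) * (x t ^ 2 - 1) + 2 * lam * w t ^ 2) (at t)"
  unfolding q_def[abs_def] using x_deriv y_deriv
  by (auto intro!: derivative_eq_intros simp: D_def algebra_simps)

lemma isCont_w: "t \<in> J \<Longrightarrow> isCont w t"
  by (rule DERIV_isCont[OF w_deriv])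

lemma isCont_x: "t \<in> J \<Longrightarrow> isCont x t"
  by (rule DERIV_isCont[OF x_deriv])

lemma isCont_y: "t \<in> J \<Longrightarrow> isCont y t"
  by (rule DERIV_isCont[OF y_deriv])

lemma isCont_D: "t \<in> J \<Longrightarrow> isCont D t"
  by (rule DERIV_isCont[OF D_deriv])

lemma DERIV_nonneg_imp_le_on_J:
  assumes "s \<in> J" "t \<in> J" "s \<le> t"
    and "\<And>r. r \<in> J \<Longrightarrow> s \<le> r \<Longrightarrow> r \<le> t \<Longrightarrow> (f has_real_derivative f' r) (at r)"
    and "\<And>r. r \<in> J \<Longrightarrow> s \<le> r \<Longrightarrow> r \<le> t \<Longrightarrow> 0 \<le> f' r"
  shows "f s \<le> f t"
  using Icc_subset_J[OF assms(1,2)] assms(3-5)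
  by (intro deriv_nonneg_imp_mono[of s t f f']) (auto simp: subset_iff)

lemma D_t0_pos: "0 < D t0"
  using x'_t0_pos by (simp add: D_def)

lemma D_pos_if_pos_before:
  assumes "\<tau> \<in> J" and D_pos: "\<And>t. t0 \<le> t \<Longrightarrow> t < \<tau> \<Longrightarrow> 0 < D t"
  shows "0 < D \<tau>"
proof -
  have sub: "{t0..\<tau>} \<subseteq> J"
    by (rule Icc_subset_J[OF t0_in_J assms(1)])
  have x_gt_1: "1 < x t" if "t0 \<le> t" "t < \<tau>" for t
  proof -
    have "x t0 \<le> x t"
      using sub that D_pos by (intro DERIV_nonneg_imp_le_on_J[of t0 t x D]) (auto intro: x_deriv less_imp_le)
    then show ?thesis
      using x_t0_gt_1 by simp
  qed
  have "\<forall>t. t0 \<le> t \<and> t \<le> \<tau> \<longrightarrow> isCont (\<lambda>t. y t - 3 * x t) t"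
    using sub by (auto intro!: continuous_intros isCont_x isCont_y)
  then obtain M where M: "\<forall>t. t0 \<le> t \<and> t \<le> \<tau> \<longrightarrow> y t - 3 * x t \<le> M"
    using isCont_bounded[OF J_ge_t0[OF assms(1)]] by blast
  have "D t0 * exp (- M * (\<tau> - t0)) \<le> D \<tau>"
  proof (rule DERIV_ge_mult_imp_exp_lower_bound)
    show "continuous_on {t0..\<tau>} D"
      using sub isCont_D by (auto intro!: continuous_at_imp_continuous_on)
    fix t assume t: "t0 < t" "t < \<tau>"
    then show "(D has_real_derivative D t * (3 * x t - y t) + (real n - 1) * x t * (x t ^ 2 - 1)) (at t)"
      using sub by (intro D_deriv) auto
    have "D t * (- M) \<le> D t * (3 * x t - y t)"
      using M[rule_format, of t] D_pos[of t] t by (intro mult_left_mono) auto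
    moreover have "0 \<le> (real n - 1) * x t * (x t ^ 2 - 1)"
      using x_gt_1[of t] t n_ge_2 by (simp add: one_le_power)
    ultimately show "- M * D t \<le> D t * (3 * x t - y t) + (real n - 1) * x t * (x t ^ 2 - 1)"
      by (simp add: mult.commute)
  qed (use J_ge_t0[OF assms(1)] in simp)
  moreover have "0 < D t0 * exp (- M * (\<tau> - t0))"
    using D_t0_pos by simp
  ultimately show ?thesis
    by linarith
qed

lemma D_pos: "t \<in> J \<Longrightarrow> 0 < D t"
proof (rule ccontr)
  fix s assume "s \<in> J" "\<not> 0 < D s"
  have "continuous_on {t0..s} D"
    using Icc_subset_J[OF t0_in_J \<open>s \<in> J\<close>] isCont_D by (auto intro!: continuous_at_imp_continuous_on)
  moreover have "D s \<le> 0"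
    using \<open>\<not> 0 < D s\<close> by simp
  ultimately obtain \<tau> where \<tau>: "t0 < \<tau>" "\<tau> \<le> s" "D \<tau> \<le> 0"
    and "\<And>t. t0 \<le> t \<Longrightarrow> t < \<tau> \<Longrightarrow> 0 < D t"
    by (rule first_nonpos_point[of t0 s D, OF J_ge_t0[OF \<open>s \<in> J\<close>] _ D_t0_pos]) blast+
  moreover have "\<tau> \<in> J"
    using Icc_subset_J[OF t0_in_J \<open>s \<in> J\<close>] \<tau> by auto
  ultimately show False
    using D_pos_if_pos_before by fastforce
qed

lemma x_mono: "s \<in> J \<Longrightarrow> t \<in> J \<Longrightarrow> s \<le> t \<Longrightarrow> x s \<le> x t"
  by (rule DERIV_nonneg_imp_le_on_J[of s t x D]) (auto intro: x_deriv less_imp_le D_pos)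

lemma x_gt_1: "t \<in> J \<Longrightarrow> 1 < x t"
  using x_mono[OF t0_in_J _ J_ge_t0] x_t0_gt_1 by fastforce

lemma w_mono:
  assumes "s \<in> J" "t \<in> J" "s \<le> t"
  shows "w s \<le> w t"
proof (rule DERIV_nonneg_imp_le_on_J[OF assms, of w "\<lambda>r. x r * w r"])
  fix r assume r: "r \<in> J"
  show "(w has_real_derivative x r * w r) (at r)"
    by (rule w_deriv[OF r])
  show "0 \<le> x r * w r"
    using x_gt_1[OF r] w_pos_J[OF r] by simp
qed

lemma q_lower_linear:
  assumes "s \<in> J" "t \<in> J" "s \<le> t"
  shows "q s + 2 * lam * w t0 ^ 2 * (t - s) \<le> q t"
proof -
  let ?\<alpha> = "2 * lam * w t0 ^ 2"
  have "q s - ?\<alpha> * s \<le> q t - ?\<alpha> * t"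
  proof (rule DERIV_nonneg_imp_le_on_J[OF assms])
    fix r assume r: "r \<in> J"
    show "((\<lambda>t. q t - ?\<alpha> * t) has_real_derivative
        (real n - 1) * (x r ^ 2 - 1) + 2 * lam * w r ^ 2 - ?\<alpha>) (at r)"
      using q_deriv[OF r] by (auto intro!: derivative_eq_intros)
    have "w t0 ^ 2 \<le> w r ^ 2"
      using w_mono[OF t0_in_J r J_ge_t0[OF r]] w_pos_J[OF t0_in_J] by (simp add: power_mono)
    then have "?\<alpha> \<le> 2 * lam * w r ^ 2"
      using lam_pos by simp
    moreover have "0 \<le> (real n - 1) * (x r ^ 2 - 1)"
      using x_gt_1[OF r] n_ge_2 by (simp add: one_le_power)
    ultimately show "0 \<le> (real n - 1) * (x r ^ 2 - 1) + 2 * lam * w r ^ 2 - ?\<alpha>"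
      by linarith
  qed
  then show ?thesis
    by (simp add: algebra_simps)
qed

lemma q_mono: "s \<in> J \<Longrightarrow> t \<in> J \<Longrightarrow> s \<le> t \<Longrightarrow> q s \<le> q t"
  using q_lower_linear[of s t] lam_pos by (smt (verit) mult_nonneg_nonneg zero_le_power2)

lemma R_deriv:
  assumes "t \<in> J"
  shows "(R has_real_derivative (real n - 1) * (x t ^ 2 + 1) / w t ^ 2) (at t)"
proof -
  have "((\<lambda>t. x t - y t) has_real_derivative D t - (x t * y t - real n * x t ^ 2 - lam * w t ^ 2)) (at t)"
    using x_deriv[OF assms] y_deriv[OF assms] by (rule DERIV_diff)
  moreover have "((\<lambda>t. w t ^ 2) has_real_derivative of_nat 2 * (x t * w t * w t ^ (2 - Suc 0))) (at t)"
    using w_deriv[OF assms] by (rule DERIV_power)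
  moreover have "w t ^ 2 \<noteq> 0"
    using w_pos_J[OF assms] by simp
  ultimately show ?thesis
    unfolding R_def[abs_def] by (rule DERIV_cong[OF DERIV_divide])
      (use w_pos_J[OF assms] in \<open>simp add: D_def field_simps power2_eq_square\<close>)
qed

lemma R_mono: "s \<in> J \<Longrightarrow> t \<in> J \<Longrightarrow> s \<le> t \<Longrightarrow> R s \<le> R t"
  using n_ge_2 by (intro DERIV_nonneg_imp_le_on_J[OF _ _ _ R_deriv]) auto

lemma D_mono_of_q_nonneg:
  assumes "s \<in> J" "t \<in> J" "s \<le> t" "0 \<le> q s"
  shows "D s \<le> D t"
proof (rule DERIV_nonneg_imp_le_on_J[OF assms(1-3) D_deriv])
  fix r assume r: "r \<in> J" "s \<le> r"
  have "0 \<le> q r"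
    using q_mono[OF assms(1) r(1,2)] assms(4) by linarith
  then have "0 \<le> D r * (3 * x r - y r)"
    using x_gt_1[OF r(1)] D_pos[OF r(1)] by (simp add: q_def)
  moreover have "0 \<le> (real n - 1) * x r * (x r ^ 2 - 1)"
    using x_gt_1[OF r(1)] n_ge_2 by (simp add: one_le_power)
  ultimately show "0 \<le> D r * (3 * x r - y r) + (real n - 1) * x r * (x r ^ 2 - 1)"
    by linarith
qed

lemma x_lower_linear_of_q_nonneg:
  assumes "s \<in> J" "t \<in> J" "s \<le> t" "0 \<le> q s"
  shows "x s + D s * (t - s) \<le> x t"
proof -
  have "x s - D s * s \<le> x t - D s * t"
  proof (rule DERIV_nonneg_imp_le_on_J[of s t "\<lambda>t. x t - D s * t" "\<lambda>r. D r - D s", OF assms(1-3)])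
    fix r assume r: "r \<in> J" "s \<le> r"
    show "((\<lambda>t. x t - D s * t) has_real_derivative D r - D s) (at r)"
      using x_deriv[OF r(1)] by (auto intro!: derivative_eq_intros)
    show "0 \<le> D r - D s"
      using D_mono_of_q_nonneg[OF assms(1) r assms(4)] by simp
  qed
  then show ?thesis
    by (simp add: algebra_simps)
qed

lemma x_unbounded_if_T_infinite:
  assumes "T = \<infinity>"
  shows "\<exists>t\<in>J. B < x t"
proof -
  have in_J: "t \<in> J" if "t0 \<le> t" for t
    unfolding J_def using assms that by simp
  define \<alpha> where "\<alpha> = 2 * lam * w t0 ^ 2"
  have "0 < \<alpha>"
    using lam_pos w_pos_J[OF t0_in_J] by (simp add: \<alpha>_def)
  define t2 where "t2 = t0 + \<bar>q t0\<bar> / \<alpha>"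
  have t2: "t0 \<le> t2" "t2 \<in> J"
    using \<open>0 < \<alpha>\<close> in_J by (simp_all add: t2_def)
  have "q t0 + \<bar>q t0\<bar> \<le> q t2"
    using q_lower_linear[OF t0_in_J t2(2,1)] \<open>0 < \<alpha>\<close> by (simp add: t2_def flip: \<alpha>_def)
  then have "0 \<le> q t2"
    by linarith
  define t3 where "t3 = t2 + (\<bar>B\<bar> + \<bar>x t2\<bar> + 1) / D t2"
  have "0 < D t2"
    by (rule D_pos[OF t2(2)])
  then have "t2 \<le> t3"
    by (simp add: t3_def)
  then have t3: "t2 \<le> t3" "t3 \<in> J"
    using t2(1) in_J by auto
  have "x t2 + (\<bar>B\<bar> + \<bar>x t2\<bar> + 1) \<le> x t3"
    using x_lower_linear_of_q_nonneg[OF t2(2) t3(2,1) \<open>0 \<le> q t2\<close>] \<open>0 < D t2\<close> by (simp add: t3_def)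
  then show ?thesis
    using t3(2) by (intro bexI[of _ t3]) auto
qed

lemma w_le_exp_if_x_bounded:
  assumes "\<And>t. t \<in> J \<Longrightarrow> x t \<le> B" and "t \<in> J"
  shows "w t \<le> w t0 * exp (B * (t - t0))"
proof -
  have sub: "{t0..t} \<subseteq> J"
    by (rule Icc_subset_J[OF t0_in_J assms(2)])
  have "- w t0 * exp (B * (t - t0)) \<le> - w t"
  proof (rule DERIV_ge_mult_imp_exp_lower_bound[of t0 t "\<lambda>t. - w t" "\<lambda>t. - (x t * w t)"])
    show "continuous_on {t0..t} (\<lambda>t. - w t)"
      using sub isCont_w by (auto intro!: continuous_at_imp_continuous_on continuous_intros)
    fix r assume "t0 < r" "r < t"
    then have r: "r \<in> J"
      using sub by auto
    show "((\<lambda>t. - w t) has_real_derivative - (x r * w r)) (at r)"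
      using w_deriv[OF r] by (rule DERIV_minus)
    show "B * - w r \<le> - (x r * w r)"
      using assms(1)[OF r] w_pos_J[OF r] by (simp add: mult_right_mono)
  qed (use J_ge_t0[OF assms(2)] in simp)
  then show ?thesis
    by simp
qed

lemma D_le_if_q_neg:
  assumes "t \<in> J" "q t < 0"
  shows "D t \<le> (real n + 1) * x t ^ 2"
proof -
  have "x t * (- x t) < x t * y t"
    using assms x_gt_1[OF assms(1)] by (intro mult_strict_left_mono) (auto simp: q_def)
  moreover have "real n - 1 \<le> (real n - 1) * x t ^ 2"
    using x_gt_1[OF assms(1)] n_ge_2 by (simp add: one_le_power)
  moreover have "0 \<le> lam * w t ^ 2"
    using lam_pos by simp
  ultimately show ?thesis
    by (simp add: D_def algebra_simps power2_eq_square)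
qed

lemma q_grows_with_x_if_q_neg:
  assumes q_neg: "\<And>t. t \<in> J \<Longrightarrow> q t < 0"
  obtains c where "0 < c" "\<And>t. t \<in> J \<Longrightarrow> q t0 + c * (x t - x t0) \<le> q t"
proof
  define a where "a = x t0"
  \<comment> \<open>q < 0 gives D \<le> (n + 1) x^2, and x \<ge> a gives x^2 - 1 \<ge> (1 - 1 / a^2) x^2, so (q - c x)' \<ge> 0.\<close>
  define c where "c = (real n - 1) * (1 - 1 / a ^ 2) / (real n + 1)"
  have "1 < a"
    using x_t0_gt_1 by (simp add: a_def)
  then show "0 < c"
    using n_ge_2 by (simp add: c_def power_less_one_iff)
  have c_D_le: "c * D t \<le> (real n - 1) * (x t ^ 2 - 1)" if t: "t \<in> J" for t
  proof -
    have "c * D t \<le> c * ((real n + 1) * x t ^ 2)"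
      using D_le_if_q_neg[OF t q_neg[OF t]] \<open>0 < c\<close> by (rule mult_left_mono[OF _ less_imp_le])
    also have "\<dots> = (real n - 1) * ((1 - 1 / a ^ 2) * x t ^ 2)"
      by (simp add: c_def)
    also have "\<dots> \<le> (real n - 1) * (x t ^ 2 - 1)"
    proof -
      have "1 \<le> x t ^ 2 / a ^ 2"
        using \<open>1 < a\<close> x_mono[OF t0_in_J t J_ge_t0[OF t]] by (simp add: a_def power_mono)
      then show ?thesis
        using n_ge_2 by (intro mult_left_mono) (simp_all add: left_diff_distrib)
    qed
    finally show ?thesis .
  qed
  fix t assume t: "t \<in> J"
  have "q t0 - c * x t0 \<le> q t - c * x t"
  proof (rule DERIV_nonneg_imp_le_on_J[OF t0_in_J t J_ge_t0[OF t]])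
    fix r assume r: "r \<in> J"
    show "((\<lambda>t. q t - c * x t) has_real_derivative
        (real n - 1) * (x r ^ 2 - 1) + 2 * lam * w r ^ 2 - c * D r) (at r)"
      using q_deriv[OF r] x_deriv[OF r] by (auto intro!: derivative_eq_intros)
    show "0 \<le> (real n - 1) * (x r ^ 2 - 1) + 2 * lam * w r ^ 2 - c * D r"
      using c_D_le[OF r] lam_pos zero_le_power2[of "w r"] by (smt (verit) mult_nonneg_nonneg)
  qed
  then show "q t0 + c * (x t - x t0) \<le> q t"
    by (simp add: algebra_simps)
qed

lemma exists_q_nonneg_if_x_unbounded:
  assumes unbounded: "\<And>B. \<exists>t\<in>J. B < x t"
  shows "\<exists>t\<in>J. 0 \<le> q t"
proof (rule ccontr)
  assume "\<not> (\<exists>t\<in>J. 0 \<le> q t)"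
  then have q_neg: "q t < 0" if "t \<in> J" for t
    using that by force
  obtain c where "0 < c" and q_ge: "\<And>t. t \<in> J \<Longrightarrow> q t0 + c * (x t - x t0) \<le> q t"
    using q_grows_with_x_if_q_neg[OF q_neg] by blast
  obtain t where t: "t \<in> J" "x t0 + (\<bar>q t0\<bar> + 1) / c < x t"
    using unbounded by blast
  then have "\<bar>q t0\<bar> + 1 < c * (x t - x t0)"
    using \<open>0 < c\<close> by (simp add: field_simps)
  then show False
    using q_ge[OF t(1)] q_neg[OF t(1)] by linarith
qed

lemma lam_w_sq_le:
  assumes "s \<in> J" "t \<in> J" "s \<le> t" "0 < x s - y s"
  shows "lam * w t ^ 2 \<le> lam * w s ^ 2 / (x s - y s) * (x t - y t)"
proof -
  have "(x s - y s) / w s ^ 2 \<le> (x t - y t) / w t ^ 2"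
    using R_mono[OF assms(1-3)] by (simp add: R_def)
  then have "(x s - y s) * w t ^ 2 \<le> (x t - y t) * w s ^ 2"
    using w_pos_J[OF assms(1)] w_pos_J[OF assms(2)] by (simp add: field_simps)
  then have "lam * ((x s - y s) * w t ^ 2) \<le> lam * ((x t - y t) * w s ^ 2)"
    using lam_pos by (intro mult_left_mono) auto
  then show ?thesis
    using assms(4) by (simp add: field_simps)
qed

lemma D_ge_if_w_small:
  assumes "t \<in> J" "0 \<le> q t" "lam * w t ^ 2 \<le> x t / 4 * (x t - y t)"
  shows "3 / 2 * x t ^ 2 \<le> D t"
proof -
  have "3 / 4 * (x t * (x t - y t)) \<le> D t"
    using assms(3) n_ge_2 by (simp add: D_def algebra_simps power2_eq_square)
  moreover have "x t * (2 * x t) \<le> x t * (x t - y t)"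
    using assms(2) x_gt_1[OF assms(1)] by (intro mult_left_mono) (auto simp: q_def)
  ultimately show ?thesis
    by (simp add: power2_eq_square)
qed

lemma D_ge_if_x_unbounded:
  assumes unbounded: "\<And>B. \<exists>t\<in>J. B < x t"
  obtains t1 where "t1 \<in> J" "\<And>t. t \<in> J \<Longrightarrow> t1 \<le> t \<Longrightarrow> 3 / 2 * x t ^ 2 \<le> D t"
proof -
  obtain t2 where t2: "t2 \<in> J" "0 \<le> q t2"
    using exists_q_nonneg_if_x_unbounded[OF unbounded] by blast
  then have "0 < x t2 - y t2"
    using x_gt_1[OF t2(1)] by (simp add: q_def)
  define \<epsilon> where "\<epsilon> = lam * w t2 ^ 2 / (x t2 - y t2)"
  obtain t1 where t1: "t1 \<in> J" "max (4 * \<epsilon>) (x t2) < x t1"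
    using unbounded by blast
  then have "t2 \<le> t1"
    using x_mono[OF t1(1) t2(1)] by fastforce
  have "3 / 2 * x t ^ 2 \<le> D t" if t: "t \<in> J" "t1 \<le> t" for t
  proof (rule D_ge_if_w_small[OF t(1)])
    have "t2 \<le> t"
      using \<open>t2 \<le> t1\<close> t(2) by simp
    then show "0 \<le> q t"
      using q_mono[OF t2(1) t(1)] t2(2) by simp
    then have "0 \<le> x t - y t"
      using x_gt_1[OF t(1)] by (simp add: q_def)
    have "lam * w t ^ 2 \<le> \<epsilon> * (x t - y t)"
      using lam_w_sq_le[OF t2(1) t(1) \<open>t2 \<le> t\<close> \<open>0 < x t2 - y t2\<close>] by (simp add: \<epsilon>_def)
    also have "\<dots> \<le> x t / 4 * (x t - y t)"
      using t1(2) x_mono[OF t1(1) t] \<open>0 \<le> x t - y t\<close> by (intro mult_right_mono) auto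
    finally show "lam * w t ^ 2 \<le> x t / 4 * (x t - y t)" .
  qed
  with t1(1) show ?thesis
    by (rule that)
qed

lemma F_deriv:
  assumes "t \<in> J"
  shows "(F has_real_derivative 2 * w t * (D t - x t ^ 2) / x t ^ 2) (at t)"
proof -
  have "x t \<noteq> 0"
    using x_gt_1[OF assms] by simp
  from DERIV_divide[OF DERIV_cmult[OF w_deriv[OF assms], of "- 2"] x_deriv[OF assms] this] show ?thesis
    unfolding F_def[abs_def]
    by (rule DERIV_cong) (use \<open>x t \<noteq> 0\<close> in \<open>simp add: field_simps power2_eq_square\<close>)
qed

lemma w_le_F_deriv:
  assumes "t \<in> J" "3 / 2 * x t ^ 2 \<le> D t"
  shows "w t \<le> 2 * w t * (D t - x t ^ 2) / x t ^ 2"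
proof -
  have "w t * x t ^ 2 \<le> 2 * w t * (D t - x t ^ 2)"
    using assms(2) w_pos_J[OF assms(1)] by simp
  then show ?thesis
    using x_gt_1[OF assms(1)] by (simp add: le_divide_eq)
qed

lemma einterval_subset_J: "t1 \<in> J \<Longrightarrow> einterval t1 T \<subseteq> J"
  by (auto simp: J_def einterval_def)

lemma continuous_on_w_einterval: "t1 \<in> J \<Longrightarrow> continuous_on (einterval t1 T) w"
  using einterval_subset_J isCont_w by (blast intro: continuous_at_imp_continuous_on)

lemma nn_integral_w_tail_le:
  assumes t1: "t1 \<in> J" and D_ge: "\<And>t. t \<in> J \<Longrightarrow> t1 \<le> t \<Longrightarrow> 3 / 2 * x t ^ 2 \<le> D t"
  shows "(\<integral>\<^sup>+t\<in>einterval t1 T. ennreal (w t) \<partial>lborel) \<le> ennreal (2 * w t1 / x t1)"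
proof (rule nn_integral_einterval_le[OF _ continuous_on_w_einterval[OF t1]])
  show "ereal t1 < T"
    using t1 by (simp add: J_def)
  fix u assume u: "t1 < u" "ereal u < T"
  then have "u \<in> J"
    using t1 by (simp add: J_def)
  then have sub: "{t1..u} \<subseteq> J"
    by (rule Icc_subset_J[OF t1])
  have "(\<integral>\<^sup>+t\<in>{t1..u}. ennreal (w t) \<partial>lborel) \<le> ennreal (F u - F t1)"
  proof (rule nn_integral_Icc_le_FTC[where F' = "\<lambda>t. 2 * w t * (D t - x t ^ 2) / x t ^ 2"])
    show "continuous_on {t1..u} (\<lambda>t. 2 * w t * (D t - x t ^ 2) / x t ^ 2)"
      using sub x_gt_1 isCont_w isCont_D isCont_x
      by (intro continuous_at_imp_continuous_on ballI continuous_intros) force+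
    fix t assume "t \<in> {t1..u}"
    then have t: "t \<in> J" "t1 \<le> t"
      using sub by auto
    show "(F has_real_derivative 2 * w t * (D t - x t ^ 2) / x t ^ 2) (at t)"
      by (rule F_deriv[OF t(1)])
    show "0 \<le> w t"
      using w_pos_J[OF t(1)] by simp
    show "w t \<le> 2 * w t * (D t - x t ^ 2) / x t ^ 2"
      by (rule w_le_F_deriv[OF t(1) D_ge[OF t]])
  qed (use u in simp)
  also have "\<dots> \<le> ennreal (2 * w t1 / x t1)"
    using w_pos_J[OF \<open>u \<in> J\<close>] x_gt_1[OF \<open>u \<in> J\<close>] by (intro ennreal_leI) (simp add: F_def)
  finally show "(\<integral>\<^sup>+t\<in>{t1..u}. ennreal (w t) \<partial>lborel) \<le> ennreal (2 * w t1 / x t1)" .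
qed

lemma nn_integral_w_finite_if_x_bounded:
  assumes "\<And>t. t \<in> J \<Longrightarrow> x t \<le> B"
  shows "(\<integral>\<^sup>+t\<in>einterval t0 T. ennreal (w t) \<partial>lborel) < \<infinity>"
proof -
  have "T \<noteq> \<infinity>"
    using x_unbounded_if_T_infinite[of B] assms by force
  then obtain Tr where T: "T = ereal Tr"
    using t0_less_T by (cases T) auto
  have "w t \<le> w t0 * exp (B * (Tr - t0))" if "t \<in> einterval t0 T" for t
  proof -
    have "t \<in> J" "t < Tr"
      using that einterval_subset_J[OF t0_in_J] T by (auto simp: einterval_def)
    have "w t \<le> w t0 * exp (B * (t - t0))"
      by (rule w_le_exp_if_x_bounded[OF assms \<open>t \<in> J\<close>])
    also have "\<dots> \<le> w t0 * exp (B * (Tr - t0))"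
      using assms[OF t0_in_J] x_t0_gt_1 w_pos_J[OF t0_in_J] \<open>t < Tr\<close> by simp
    finally show ?thesis .
  qed
  moreover have "einterval t0 T \<subseteq> {t0..Tr}"
    using T by (auto simp: einterval_def)
  ultimately show ?thesis
    by (intro nn_integral_bounded_less_top)
qed

lemma nn_integral_w_finite_if_x_unbounded:
  assumes "\<And>B. \<exists>t\<in>J. B < x t"
  shows "(\<integral>\<^sup>+t\<in>einterval t0 T. ennreal (w t) \<partial>lborel) < \<infinity>"
proof -
  obtain t1 where t1: "t1 \<in> J" and D_ge: "\<And>t. t \<in> J \<Longrightarrow> t1 \<le> t \<Longrightarrow> 3 / 2 * x t ^ 2 \<le> D t"
    using D_ge_if_x_unbounded[OF assms] by blast
  have "w t \<le> w t1" if "t \<in> {t0<..t1}" for t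
    using that Icc_subset_J[OF t0_in_J t1] by (intro w_mono[OF _ t1]) auto
  then have "(\<integral>\<^sup>+t\<in>{t0<..t1}. ennreal (w t) \<partial>lborel) < \<infinity>"
    by (intro nn_integral_bounded_less_top[of _ t0 t1]) auto
  moreover have "(\<integral>\<^sup>+t\<in>einterval t1 T. ennreal (w t) \<partial>lborel) < \<infinity>"
    using nn_integral_w_tail_le[OF t1 D_ge] by (simp add: order_le_less_trans)
  ultimately show ?thesis
    using t1 by (subst nn_integral_einterval_split[OF continuous_on_w_einterval[OF t0_in_J]]) (auto simp: J_def)
qed

lemma nn_integral_w_finite: "(\<integral>\<^sup>+t\<in>einterval t0 T. ennreal (w t) \<partial>lborel) < \<infinity>"
  using nn_integral_w_finite_if_x_bounded nn_integral_w_finite_if_x_unbounded by (meson not_le)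

end

theorem lemma3p7:
  fixes n :: nat and lam :: real and S T :: ereal and w x y :: "real \<Rightarrow> real" and t0 :: real
  assumes "n \<ge> 2" and "lam > 0"
    and "is_maximal_sol n lam S T w x y"
    and "\<forall>t\<in>eIoo S T. w t > 0"
    and "t0 \<in> eIoo S T"
    and "x t0 > 1" and "deriv x t0 > 0"
  shows "(\<integral>\<^sup>+ s \<in> eIoo (ereal t0) T. ennreal (w s) \<partial>lborel) < \<infinity>"
proof -
  \<comment> \<open>Only the solution property on (S,T) is used.\<close>
  have sol: "is_sol n lam (eIoo S T) w x y"
    using assms(3) by (simp add: is_maximal_sol_def)
  have forward: "{t. t0 \<le> t \<and> ereal t < T} \<subseteq> eIoo S T"
    using assms(5) by (auto simp: eIoo_def intro: less_le_trans[of S "ereal t0"])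
  have "(x has_real_derivative x t0 ^ 2 - x t0 * y t0 + real n - 1 - lam * w t0 ^ 2) (at t0)"
    using sol assms(5) by (simp add: is_sol_def)
  then have x'_t0: "deriv x t0 = x t0 ^ 2 - x t0 * y t0 + real n - 1 - lam * w t0 ^ 2"
    by (rule DERIV_imp_deriv)
  interpret expanding_solution n lam T w x y t0
  proof
    show "is_sol n lam {t. t0 \<le> t \<and> ereal t < T} w x y"
      using sol forward by (auto simp: is_sol_def)
  qed (use assms forward x'_t0 in \<open>auto simp: eIoo_def\<close>)
  have "eIoo (ereal t0) T = einterval t0 T"
    by (simp add: eIoo_def einterval_def)
  then show ?thesis
    using nn_integral_w_finite by simp
qed

end
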